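(* Consider an execution of the MBBA protocol (described in the context) in which fewer than $n/3$ of the $n$ players are malicious. For each component $c\in\{1,\dots,m\}$: if $c$-agreement holds at (the end of) some step, then it continues to hold in all subsequent steps.
   Context: Network model: $n$ players; every pair is joined by a direct private channel; synchronous steps, instantaneous delivery. Fewer than $n/3$ players are malicious (arbitrary behaviour); honest players follow the protocol and send the same message to every player. For player $i$, step $s$, component $c$ and value $v$, $\#_i^s(v,c)$ is the number of distinct players from which $i$ received in step $s$ a valid vector message whose $c$-th component is $v$ (counting $i$'s own); conflicting messages from one sender in one step are both discarded, duplicates count once. $c$-agreement holds (at a given moment) if there is a value $v$ such that the $c$-th component $b_{j,c}$ of every honest player $j$'s current vector equals $v$. Protocol MBBA: $H$ is a hash function modeled as a random oracle (outputs ordered lexicographically); $\mathrm{SIG}_i$ is a unique-signature scheme with publicly known keys; $r$ a common random string; counter $\gamma$ starts at 0. Player $i$ holds $\mathbf{b}_i\in\{0,1\}^m$ and $\mathbf{f}_i$, initially all zeros. EXIT CHECK: if $\mathbf{f}_i$ is all ones, $i$ sends $\mathbf{b}_i$ marked final (treated by receivers as $i$'s message in all later steps), outputs $\mathbf{b}_i$ and halts. STEP 1: $i$ sends $\mathbf{b}_i$; for each $c$ with $f_{i,c}=0$: if $\#_i^1(0,c)>\frac23 n$, set $b_{i,c}=0$, $f_{i,c}=1$, perform EXIT CHECK; else if $\#_i^1(1,c)>\frac23n$, set $b_{i,c}=1$; else $b_{i,c}=0$. STEP 2: $i$ sends $\mathbf{b}_i$; for each $c$ with $f_{i,c}=0$: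 if $\#_i^2(1,c)>\frac23 n$, set $b_{i,c}=1$, $f_{i,c}=1$, perform EXIT CHECK; else if $\#_i^2(0,c)>\frac23n$, set $b_{i,c}=0$; else $b_{i,c}=1$. STEP 3: $i$ sends $s_i=\mathrm{SIG}_i(r\|\gamma)$ and $\mathbf{b}_i$; for each $c$ with $f_{i,c}=0$: if $\#_i^3(0,c)>\frac23n$, $b_{i,c}=0$; else if $\#_i^3(1,c)>\frac23n$, $b_{i,c}=1$; else $b_{i,c}=k_c$, the $c$-th bit of $k=H(\min_{j\in P_i}H(s_j))$ where $P_i$ is the set of players who sent $i$ a valid STEP 3 message. Then $\gamma\leftarrow\gamma+1$ and return to STEP 1. *)

theory Defs
  imports Main
begin

text \<open>Local state of a player: current vector b (bit 1 = True), flag vector f,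
  and whether the player has halted (performed a successful EXIT CHECK).
  Components are indexed 1..m.\<close>
record pstate =
  bv :: "nat \<Rightarrow> bool"
  fv :: "nat \<Rightarrow> bool"
  halted :: bool

text \<open>Received messages of one player in one step: rcv j is the (unique) valid vector
  message received from player j (None if nothing valid, e.g. conflicting messages).
  cnt n rcv c v is the number of distinct players j < n whose valid message has
  c-th component v.\<close>
definition cnt :: "nat \<Rightarrow> (nat \<Rightarrow> (nat \<Rightarrow> bool) option) \<Rightarrow> nat \<Rightarrow> bool \<Rightarrow> nat" where
  "cnt n rcv c v = card {j. j < n \<and> (\<exists>w. rcv j = Some w \<and> w c = v)}"

definition mbba_step ::
  "nat \<Rightarrow> nat \<Rightarrow> nat \<Rightarrow> (nat \<Rightarrow> (nat \<Rightarrow> bool) option) \<Rightarrow> (nat \<Rightarrow> bool) \<Rightarrow> pstate \<Rightarrow> pstate" where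
  "mbba_step n m k rcv coin st =
    (if halted st then st else
     (let Zc = (\<lambda>c. 2 * n < 3 * cnt n rcv c False);
          Oc = (\<lambda>c. 2 * n < 3 * cnt n rcv c True);
          nb = (\<lambda>c. if c \<in> {1..m} \<and> \<not> fv st c then
                     (if k = 1 then (if Zc c then False else if Oc c then True else False)
                      else if k = 2 then (if Oc c then True else if Zc c then False else True)
                      else (if Zc c then False else if Oc c then True else coin c))
                   else bv st c);
          nf = (\<lambda>c. if c \<in> {1..m} \<and> \<not> fv st c then
                     (if k = 1 then Zc c else if k = 2 then Oc c else False)
                   else fv st c)
      in \<lparr>bv = nb, fv = nf,
          halted = ((\<exists>c\<in>{1..m}. \<not> fv st c \<and> nf c) \<and> (\<forall>c\<in>{1..m}. nf c))\<rparr>))"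

text \<open>An execution: st s i is the state of player i at the end of global step s
  (st 0 = initial state); global step s+1 is STEP (s mod 3 + 1).
  recv s i j is the valid message i received from j in global step s;
  coin s i is the bit-vector k computed by i in step s (arbitrary: abstracts the
  hash/signature common coin).\<close>
definition mbba_exec ::
  "nat \<Rightarrow> nat \<Rightarrow> nat set \<Rightarrow> (nat \<Rightarrow> nat \<Rightarrow> nat \<Rightarrow> (nat \<Rightarrow> bool) option)
    \<Rightarrow> (nat \<Rightarrow> nat \<Rightarrow> nat \<Rightarrow> bool) \<Rightarrow> (nat \<Rightarrow> nat \<Rightarrow> pstate) \<Rightarrow> bool" where
  "mbba_exec n m Bad recv coin st \<longleftrightarrow>
     Bad \<subseteq> {..<n} \<and> 3 * card Bad < n \<and>
     (\<forall>i<n. i \<notin> Bad \<longrightarrow> fv (st 0 i) = (\<lambda>_. False) \<and> \<not> halted (st 0 i)) \<and>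
     (\<forall>s i j. i < n \<and> j < n \<and> j \<notin> Bad \<longrightarrow> recv (Suc s) i j = Some (bv (st s j))) \<and>
     (\<forall>s i. i < n \<and> i \<notin> Bad \<longrightarrow>
        st (Suc s) i = mbba_step n m (s mod 3 + 1) (recv (Suc s) i) (coin (Suc s) i) (st s i))"

definition c_agreement :: "nat \<Rightarrow> nat set \<Rightarrow> (nat \<Rightarrow> nat \<Rightarrow> pstate) \<Rightarrow> nat \<Rightarrow> nat \<Rightarrow> bool" where
  "c_agreement n Bad st s c \<longleftrightarrow> (\<exists>v. \<forall>j<n. j \<notin> Bad \<longrightarrow> bv (st s j) c = v)"

end

theory Submission
  imports Defs
begin

text \<open>Once all honest players hold the same bit v in component c, every honest player
  receives v from more than 2n/3 senders, so the opposite bit cannot also reach a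
  supermajority. Each of the three step rules adopts a value that has a supermajority,
  so v is kept; components that are not updated keep v anyway.\<close>

lemma cnt_add_cnt_not_le: "cnt n rcv c v + cnt n rcv c (\<not> v) \<le> n"
proof -
  let ?S = "\<lambda>v. {j. j < n \<and> (\<exists>w. rcv j = Some w \<and> w c = v)}"
  have "card (?S v) + card (?S (\<not> v)) = card (?S v \<union> ?S (\<not> v))"
    by (rule card_Un_disjoint[symmetric]) auto
  also have "\<dots> \<le> card {..<n}"
    by (rule card_mono) auto
  finally show ?thesis
    unfolding cnt_def by simp
qed

lemma cnt_ge_honest:
  assumes "Bad \<subseteq> {..<n}"
    and "\<forall>j<n. j \<notin> Bad \<longrightarrow> (\<exists>w. rcv j = Some w \<and> w c = v)"
  shows "n - card Bad \<le> cnt n rcv c v"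
proof -
  have "card ({..<n} - Bad) \<le> cnt n rcv c v"
    unfolding cnt_def using assms(2) by (intro card_mono) auto
  moreover have "card ({..<n} - Bad) = n - card Bad"
    using assms(1) by (simp add: card_Diff_subset finite_subset)
  ultimately show ?thesis by simp
qed

lemma bv_mbba_step_supermajority:
  assumes "2 * n < 3 * cnt n rcv c v"
    and "bv st c = v"
  shows "bv (mbba_step n m k rcv coin st) c = v"
proof -
  have "\<not> 2 * n < 3 * cnt n rcv c (\<not> v)"
    using assms(1) cnt_add_cnt_not_le[of n rcv c v] by linarith
  then show ?thesis
    using assms by (cases v) (auto simp: mbba_step_def Let_def)
qed

lemma honest_supermajority:
  assumes ex: "mbba_exec n m Bad recv coin st"
    and agree: "\<forall>j<n. j \<notin> Bad \<longrightarrow> bv (st s j) c = v"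
    and "i < n"
  shows "2 * n < 3 * cnt n (recv (Suc s) i) c v"
proof -
  have Bad: "Bad \<subseteq> {..<n}" "3 * card Bad < n"
    using ex unfolding mbba_exec_def by auto
  have "\<forall>j<n. j \<notin> Bad \<longrightarrow> (\<exists>w. recv (Suc s) i j = Some w \<and> w c = v)"
    using ex agree \<open>i < n\<close> unfolding mbba_exec_def by auto
  then have "n - card Bad \<le> cnt n (recv (Suc s) i) c v"
    by (rule cnt_ge_honest[OF Bad(1)])
  with Bad(2) show ?thesis by linarith
qed

lemma honest_agreement_Suc:
  assumes ex: "mbba_exec n m Bad recv coin st"
    and agree: "\<forall>j<n. j \<notin> Bad \<longrightarrow> bv (st s j) c = v"
  shows "\<forall>j<n. j \<notin> Bad \<longrightarrow> bv (st (Suc s) j) c = v"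
proof (intro allI impI)
  fix i assume i: "i < n" "i \<notin> Bad"
  have "st (Suc s) i = mbba_step n m (s mod 3 + 1) (recv (Suc s) i) (coin (Suc s) i) (st s i)"
    using ex i unfolding mbba_exec_def by auto
  then show "bv (st (Suc s) i) c = v"
    using bv_mbba_step_supermajority[OF honest_supermajority[OF ex agree i(1)]] agree i
    by simp
qed

theorem lemma2:
  assumes "mbba_exec n m Bad recv coin st"
      and "c \<in> {1..m}"
      and "c_agreement n Bad st s c"
      and "s \<le> s'"
  shows "c_agreement n Bad st s' c"
proof -
  obtain v where agree: "\<forall>j<n. j \<notin> Bad \<longrightarrow> bv (st s j) c = v"
    using assms(3) unfolding c_agreement_def by auto
  from \<open>s \<le> s'\<close> have "\<forall>j<n. j \<notin> Bad \<longrightarrow> bv (st s' j) c = v"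
  proof (induction s' rule: dec_induct)
    case base
    show ?case by (rule agree)
  next
    case (step k)
    show ?case by (rule honest_agreement_Suc[OF assms(1) step.IH])
  qed
  then show ?thesis
    unfolding c_agreement_def by auto
qed

end
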